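(* Let $b,c_1,c_2$ be positive integers, let $\alpha/\beta$ be the right lobster $\mathcal{L}^{c_1,c_2}_b$, and let $c=\min(c_1,c_2)$. Then the minimal elements of $\mathrm{SET}(\alpha/\beta)$ are in bijection with the words in the letters $B$ and $C$ having exactly $b$ occurrences of $B$ and $c$ occurrences of $C$. Consequently $\mathrm{SET}(\alpha/\beta)$ has $\binom{b+c}{b}$ minimal elements, and $S^{\mathrm{col}}_{\alpha/\beta}$ is one of them.
   Context: Rows of skew diagrams are numbered from the bottom. The right lobster $\mathcal{L}^{c_1,c_2}_b$ is the skew diagram $\alpha/\beta$ with $\alpha=(b+1+c_2,b+1,b+1+c_1)$, $\beta=(b+1,1,b+1)$: a bottom row of $c_2$ cells in columns $b+2,\ldots,b+1+c_2$, a middle row of $b$ cells in columns $2,\ldots,b+1$, and a top row of $c_1$ cells in columns $b+2,\ldots,b+1+c_1$. $\mathrm{SET}(\alpha/\beta)$ is the set of bijective fillings with $1,\ldots,N$ ($N=b+c_1+c_2$) whose rows increase left to right and columns increase bottom to top. For $1\le i\le N-1$, $\pi_i(T)=T$ if $i+1$ is in a strictly higher row than $i$, $\pi_i(T)=s_i(T)$ (swap $i$ and $i+1$) if $i+1$ is in a strictly lower row than $i$, and $\pi_i(T)=0$ otherwise; the poset order is $T\le T'$ iff $T'$ is obtained from $T$ by a sequence of operators $\pi_i$ (all intermediate results nonzero); minimal elements are those with no strictly smaller element. $S^{\mathrm{col}}_{\alpha/\beta}$ is the tableau filled with $1,\ldots,N$ consecutively along columns bottom to top, from the leftmost column rightward.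 *)

theory Defs
  imports Main
begin

(* Cells are pairs (row, column); rows numbered from 1 at the bottom, columns from 1 at the left.
   Row r of alpha/beta consists of the columns beta_r < col <= alpha_r, where alpha_r = alpha ! (r-1). *)
definition skew_cells :: "nat list \<Rightarrow> nat list \<Rightarrow> (nat \<times> nat) set" where
  "skew_cells \<alpha> \<beta> = {(r, c). 1 \<le> r \<and> r \<le> length \<alpha> \<and> \<beta> ! (r - 1) < c \<and> c \<le> \<alpha> ! (r - 1)}"

definition skew_size :: "nat list \<Rightarrow> nat list \<Rightarrow> nat" where
  "skew_size \<alpha> \<beta> = card (skew_cells \<alpha> \<beta>)"

definition SET :: "nat list \<Rightarrow> nat list \<Rightarrow> ((nat \<times> nat) \<Rightarrow> nat) set" where
  "SET \<alpha> \<beta> = {T.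
     (\<forall>x. x \<notin> skew_cells \<alpha> \<beta> \<longrightarrow> T x = 0) \<and>
     bij_betw T (skew_cells \<alpha> \<beta>) {1..skew_size \<alpha> \<beta>} \<and>
     (\<forall>x\<in>skew_cells \<alpha> \<beta>. \<forall>y\<in>skew_cells \<alpha> \<beta>. fst x = fst y \<and> snd x < snd y \<longrightarrow> T x < T y) \<and>
     (\<forall>x\<in>skew_cells \<alpha> \<beta>. \<forall>y\<in>skew_cells \<alpha> \<beta>. snd x = snd y \<and> fst x < fst y \<longrightarrow> T x < T y)}"

definition row_of :: "nat list \<Rightarrow> nat list \<Rightarrow> ((nat \<times> nat) \<Rightarrow> nat) \<Rightarrow> nat \<Rightarrow> nat" where
  "row_of \<alpha> \<beta> T k = fst (THE x. x \<in> skew_cells \<alpha> \<beta> \<and> T x = k)"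

definition swap_entries :: "nat \<Rightarrow> ((nat \<times> nat) \<Rightarrow> nat) \<Rightarrow> ((nat \<times> nat) \<Rightarrow> nat)" where
  "swap_entries i T = (\<lambda>x. if T x = i then i + 1 else if T x = i + 1 then i else T x)"

(* the operator pi_i; None represents 0 *)
definition pi_op :: "nat list \<Rightarrow> nat list \<Rightarrow> nat \<Rightarrow> ((nat \<times> nat) \<Rightarrow> nat) \<Rightarrow> ((nat \<times> nat) \<Rightarrow> nat) option" where
  "pi_op \<alpha> \<beta> i T =
     (if row_of \<alpha> \<beta> T i < row_of \<alpha> \<beta> T (i + 1) then Some T
      else if row_of \<alpha> \<beta> T (i + 1) < row_of \<alpha> \<beta> T i then Some (swap_entries i T)
      else None)"

definition pi_step :: "nat list \<Rightarrow> nat list \<Rightarrow> (((nat \<times> nat) \<Rightarrow> nat) \<times> ((nat \<times> nat) \<Rightarrow> nat)) set" where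
  "pi_step \<alpha> \<beta> = {(U, V). U \<in> SET \<alpha> \<beta> \<and>
      (\<exists>i. 1 \<le> i \<and> i \<le> skew_size \<alpha> \<beta> - 1 \<and> pi_op \<alpha> \<beta> i U = Some V)}"

definition set_le :: "nat list \<Rightarrow> nat list \<Rightarrow> ((nat \<times> nat) \<Rightarrow> nat) \<Rightarrow> ((nat \<times> nat) \<Rightarrow> nat) \<Rightarrow> bool" where
  "set_le \<alpha> \<beta> T T' \<longleftrightarrow> (T, T') \<in> (pi_step \<alpha> \<beta>)\<^sup>*"

definition minimal_SET :: "nat list \<Rightarrow> nat list \<Rightarrow> ((nat \<times> nat) \<Rightarrow> nat) set" where
  "minimal_SET \<alpha> \<beta> = {T \<in> SET \<alpha> \<beta>.
      \<not> (\<exists>T'\<in>SET \<alpha> \<beta>. T' \<noteq> T \<and> set_le \<alpha> \<beta> T' T)}"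

(* S^col: fill 1..N along columns bottom to top, leftmost column first *)
definition S_col :: "nat list \<Rightarrow> nat list \<Rightarrow> (nat \<times> nat) \<Rightarrow> nat" where
  "S_col \<alpha> \<beta> x = (if x \<in> skew_cells \<alpha> \<beta>
     then card {y \<in> skew_cells \<alpha> \<beta>. snd y < snd x \<or> (snd y = snd x \<and> fst y \<le> fst x)}
     else 0)"

definition lobster_alpha :: "nat \<Rightarrow> nat \<Rightarrow> nat \<Rightarrow> nat list" where
  "lobster_alpha b c1 c2 = [b + 1 + c2, b + 1, b + 1 + c1]"

definition lobster_beta :: "nat \<Rightarrow> nat list" where
  "lobster_beta b = [b + 1, 1, b + 1]"

datatype letter = B | C

definition BC_words :: "nat \<Rightarrow> nat \<Rightarrow> letter list set" where
  "BC_words nb nc = {w. length (filter (\<lambda>x. x = B) w) = nb \<and> length (filter (\<lambda>x. x = C) w) = nc}"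

end

theory Submission
  imports Defs "HOL-Library.Sublist" "HOL-Library.Multiset"
begin

text \<open>
  A standard filling is determined by its row word, which lists the rows of the entries
  1, ..., N. Conversely, a word containing each row r as often as row r has cells is the row word
  of a filling with increasing rows, and this filling is standard iff its columns increase. The
  operator pi_i acts on row words by exchanging the letters at positions i and i + 1 when the
  first is the larger one, so the minimal tableaux are those whose row word has no ascent that
  can be exchanged without leaving the set of standard row words.

  In the right lobster only rows 1 and 3 share columns, namely their first c = min c1 c2 cells,
  so column strictness says that every prefix of the row word contains at least as many letters 1
  as letters 3, the latter counted only up to c. If c > 0, a minimal word starts either with 2 or
  with 1 3, followed by a minimal word of the lobster with one cell fewer in the middle row, or
  one cell fewer in each outer row; if c = 0, the only minimal word is 3...3 2...2 1...1. Hence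
  replacing B by 2 and C by 1 3 maps the words with b letters B and c letters C bijectively onto
  the minimal row words. The column-reading tableau has row word 2^b (1 3)^c followed by the
  leftover letters, the image of B^b C^c.
\<close>

section \<open>Occurrences and adjacent swaps in words\<close>

text \<open>Positions and occurrence numbers are counted from 0.\<close>

definition nth_occurrence :: "'a list \<Rightarrow> 'a \<Rightarrow> nat \<Rightarrow> nat \<Rightarrow> bool" where
  "nth_occurrence w r k p \<longleftrightarrow> p < length w \<and> w ! p = r \<and> count_list (take p w) r = k"

lemma count_list_take_mono:
  assumes "m \<le> n"
  shows "count_list (take m w) r \<le> count_list (take n w) r"
proof -
  have "take n w = take m w @ take (n - m) (drop m w)"
    using assms by (metis le_add_diff_inverse take_add)
  then show ?thesis by (metis count_list_append le_add1)
qed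

lemma count_list_take_Suc:
  "p < length w \<Longrightarrow> count_list (take (Suc p) w) r = count_list (take p w) r + (if w ! p = r then 1 else 0)"
  by (simp add: take_Suc_conv_app_nth)

lemma nth_occurrence_less_iff:
  assumes "nth_occurrence w r k p"
  shows "p < m \<longleftrightarrow> k < count_list (take m w) r"
proof
  assume "p < m"
  then have "count_list (take (Suc p) w) r \<le> count_list (take m w) r"
    by (intro count_list_take_mono) simp
  then show "k < count_list (take m w) r"
    using assms count_list_take_Suc[of p w r] by (simp add: nth_occurrence_def)
next
  assume "k < count_list (take m w) r"
  show "p < m"
  proof (rule ccontr)
    assume "\<not> p < m"
    then have "count_list (take m w) r \<le> k"
      using assms count_list_take_mono[of m p w r] by (simp add: nth_occurrence_def)
    with \<open>k < count_list (take m w) r\<close> show False by simp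
  qed
qed

lemma nth_occurrence_unique:
  "nth_occurrence w r k p \<Longrightarrow> nth_occurrence w r k q \<Longrightarrow> p = q"
  by (metis linorder_neqE_nat nth_occurrence_less_iff order.irrefl)

lemma nth_occurrence_exists:
  "k < count_list w r \<Longrightarrow> \<exists>p. nth_occurrence w r k p"
proof (induction w arbitrary: k)
  case Nil
  then show ?case by simp
next
  case (Cons x w)
  show ?case
  proof (cases "x = r \<and> k = 0")
    case True
    then have "nth_occurrence (x # w) r k 0" by (simp add: nth_occurrence_def)
    then show ?thesis ..
  next
    case False
    then have "(if x = r then k - 1 else k) < count_list w r" using Cons.prems by (auto split: if_splits)
    then obtain p where "nth_occurrence w r (if x = r then k - 1 else k) p" using Cons.IH by blast
    then have "nth_occurrence (x # w) r k (Suc p)" using False by (auto simp: nth_occurrence_def)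
    then show ?thesis ..
  qed
qed

lemma nth_occurrence_append_left:
  "nth_occurrence w r k p \<Longrightarrow> nth_occurrence (xs @ w) r (count_list xs r + k) (length xs + p)"
  by (simp add: nth_occurrence_def nth_append)

lemma nth_occurrence_append_right:
  "nth_occurrence xs r k p \<Longrightarrow> nth_occurrence (xs @ ys) r k p"
  by (simp add: nth_occurrence_def nth_append)

lemma count_list_replicate [simp]: "count_list (replicate n x) y = (if x = y then n else 0)"
  by (induction n) auto

lemma nth_occurrence_replicate: "k < n \<Longrightarrow> nth_occurrence (replicate n r) r k k"
  by (simp add: nth_occurrence_def)

lemma nth_occurrence_swap:
  assumes "a \<noteq> b" and "nth_occurrence (xs @ a # b # ys) r k p"
  shows "nth_occurrence (xs @ b # a # ys) r k
           (if p = length xs then Suc p else if p = Suc (length xs) then length xs else p)"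
proof -
  consider "p < length xs" | "p = length xs" | "p = Suc (length xs)" | d where "p = length xs + Suc (Suc d)"
    by (metis add_Suc_right less_imp_Suc_add linorder_neqE_nat not_less_eq add.commute)
  then show ?thesis
    using assms by cases (auto simp: nth_occurrence_def nth_append)
qed

definition ballot :: "nat \<Rightarrow> nat list \<Rightarrow> bool" where
  "ballot c w \<longleftrightarrow> (\<forall>u. prefix u w \<longrightarrow> min (count_list u 3) c \<le> count_list u 1)"

lemma ballot_0 [simp]: "ballot 0 w"
  by (simp add: ballot_def)

lemma ballot_Cons_other: "x \<noteq> 1 \<Longrightarrow> x \<noteq> 3 \<Longrightarrow> ballot c (x # w) \<longleftrightarrow> ballot c w"
  by (auto simp: ballot_def prefix_Cons)

lemma ballot_Cons_1_3: "ballot (Suc c) (1 # 3 # w) \<longleftrightarrow> ballot c w"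
proof
  assume bal: "ballot (Suc c) (1 # 3 # w)"
  have "min (count_list (1 # 3 # u) 3) (Suc c) \<le> count_list (1 # 3 # u) 1" if "prefix u w" for u
  proof -
    from that have "prefix (1 # 3 # u) (1 # 3 # w)" by simp
    with bal show ?thesis unfolding ballot_def by blast
  qed
  then show "ballot c w" by (simp add: ballot_def)
next
  assume "ballot c w"
  then show "ballot (Suc c) (1 # 3 # w)" by (auto simp: ballot_def prefix_Cons)
qed

lemma not_ballot_Cons_3: "0 < c \<Longrightarrow> \<not> ballot c (3 # w)"
  unfolding ballot_def by (auto intro!: exI[of _ "[3]"])

lemma ballot_swap:
  assumes "ballot c (xs @ a # b # ys)"
    and "min (count_list (xs @ [b]) 3) c \<le> count_list (xs @ [b]) 1"
  shows "ballot c (xs @ b # a # ys)"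
  unfolding ballot_def
proof (intro allI impI)
  fix u assume "prefix u (xs @ b # a # ys)"
  then consider "prefix u xs" | "u = xs @ [b]" | "u = xs" | us where "u = xs @ b # a # us" "prefix us ys"
    by (auto simp: prefix_append prefix_Cons)
  then show "min (count_list u 3) c \<le> count_list u 1"
  proof cases
    case 1
    then have "prefix u (xs @ a # b # ys)" by simp
    then show ?thesis using assms(1) by (simp add: ballot_def)
  next
    case 3
    then have "prefix u (xs @ a # b # ys)" by simp
    then show ?thesis using assms(1) by (simp add: ballot_def)
  next
    case (4 us)
    then have "prefix (xs @ a # b # us) (xs @ a # b # ys)" by simp
    then have "min (count_list (xs @ a # b # us) 3) c \<le> count_list (xs @ a # b # us) 1"
      using assms(1) unfolding ballot_def by blast
    moreover have "count_list (xs @ a # b # us) r = count_list u r" for r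
      using 4 by simp
    ultimately show ?thesis by simp
  qed (use assms(2) in simp)
qed

lemma ballot_iff_nth_occurrence:
  assumes "c \<le> count_list w 1"
  shows "ballot c w \<longleftrightarrow>
    (\<forall>k p q. k < c \<longrightarrow> nth_occurrence w 1 k p \<longrightarrow> nth_occurrence w 3 k q \<longrightarrow> p < q)"
proof (intro iffI allI impI)
  fix k p q
  assume "ballot c w" and "k < c" and p: "nth_occurrence w 1 k p" and q: "nth_occurrence w 3 k q"
  have "count_list (take (Suc q) w) 3 = Suc k"
    using q count_list_take_Suc[of q w 3] by (simp add: nth_occurrence_def)
  moreover have "min (count_list (take (Suc q) w) 3) c \<le> count_list (take (Suc q) w) 1"
    using \<open>ballot c w\<close> take_is_prefix unfolding ballot_def by blast
  ultimately have "p < Suc q"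
    using \<open>k < c\<close> nth_occurrence_less_iff[OF p] by simp
  moreover have "p \<noteq> q" using p q by (auto simp: nth_occurrence_def)
  ultimately show "p < q" by simp
next
  assume occ: "\<forall>k p q. k < c \<longrightarrow> nth_occurrence w 1 k p \<longrightarrow> nth_occurrence w 3 k q \<longrightarrow> p < q"
  show "ballot c w"
    unfolding ballot_def
  proof (intro allI impI)
    fix u assume "prefix u w"
    then obtain v where w: "w = u @ v" by (auto simp: prefix_def)
    show "min (count_list u 3) c \<le> count_list u 1"
    proof (cases "min (count_list u 3) c")
      case (Suc k)
      then have "k < count_list u 3" by simp
      from nth_occurrence_exists[OF this] obtain q where q: "nth_occurrence u 3 k q" ..
      have "k < c" using Suc by simp
      with assms have "k < count_list w 1" by simp
      from nth_occurrence_exists[OF this] obtain p where p: "nth_occurrence w 1 k p" ..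
      have "nth_occurrence w 3 k q" using nth_occurrence_append_right[OF q] w by simp
      with occ \<open>k < c\<close> p have "p < q" by blast
      then have "p < length u" using q by (simp add: nth_occurrence_def)
      then show ?thesis using nth_occurrence_less_iff[OF p, of "length u"] Suc w by simp
    qed simp
  qed
qed

definition swap_minimal :: "('a::linorder list \<Rightarrow> bool) \<Rightarrow> 'a list \<Rightarrow> bool" where
  "swap_minimal P w \<longleftrightarrow> P w \<and> (\<forall>xs a b ys. w = xs @ a # b # ys \<longrightarrow> a < b \<longrightarrow> \<not> P (xs @ b # a # ys))"

lemma swap_minimal_Cons_iff:
  assumes P: "\<And>v. P (x # v) \<longleftrightarrow> Q v"
  shows "swap_minimal P (x # w) \<longleftrightarrow>
    swap_minimal Q w \<and> (\<forall>a v. w = a # v \<longrightarrow> x < a \<longrightarrow> \<not> P (a # x # v))"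
proof
  assume min: "swap_minimal P (x # w)"
  have "\<not> Q (xs @ b # a # ys)" if "w = xs @ a # b # ys" "a < b" for xs a b ys
  proof -
    have "x # w = (x # xs) @ a # b # ys" using that by simp
    then have "\<not> P ((x # xs) @ b # a # ys)" using min \<open>a < b\<close> unfolding swap_minimal_def by blast
    then show ?thesis using P by simp
  qed
  moreover have "\<not> P (a # x # v)" if "w = a # v" "x < a" for a v
  proof -
    have "x # w = [] @ x # a # v" using that by simp
    then have "\<not> P ([] @ a # x # v)" using min \<open>x < a\<close> unfolding swap_minimal_def by blast
    then show ?thesis by simp
  qed
  ultimately show "swap_minimal Q w \<and> (\<forall>a v. w = a # v \<longrightarrow> x < a \<longrightarrow> \<not> P (a # x # v))"
    using min P unfolding swap_minimal_def by blast
next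
  assume "swap_minimal Q w \<and> (\<forall>a v. w = a # v \<longrightarrow> x < a \<longrightarrow> \<not> P (a # x # v))"
  then show "swap_minimal P (x # w)"
    using P unfolding swap_minimal_def by (auto simp: Cons_eq_append_conv)
qed

section \<open>Row words of standard fillings\<close>

definition row_index :: "nat list \<Rightarrow> nat \<times> nat \<Rightarrow> nat" where
  "row_index \<beta> x = snd x - \<beta> ! (fst x - 1) - 1"

definition row_word :: "nat list \<Rightarrow> nat list \<Rightarrow> ((nat \<times> nat) \<Rightarrow> nat) \<Rightarrow> nat list" where
  "row_word \<alpha> \<beta> T = map (\<lambda>i. row_of \<alpha> \<beta> T (Suc i)) [0..<skew_size \<alpha> \<beta>]"

definition word_of_shape :: "nat list \<Rightarrow> nat list \<Rightarrow> nat list \<Rightarrow> bool" where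
  "word_of_shape \<alpha> \<beta> w \<longleftrightarrow> set w \<subseteq> {1..length \<alpha>} \<and>
     (\<forall>r\<in>{1..length \<alpha>}. count_list w r = \<alpha> ! (r - 1) - \<beta> ! (r - 1))"

definition word_tableau :: "nat list \<Rightarrow> nat list \<Rightarrow> nat list \<Rightarrow> (nat \<times> nat) \<Rightarrow> nat" where
  "word_tableau \<alpha> \<beta> w x =
     (if x \<in> skew_cells \<alpha> \<beta> then Suc (THE p. nth_occurrence w (fst x) (row_index \<beta> x) p) else 0)"

definition standard_word :: "nat list \<Rightarrow> nat list \<Rightarrow> nat list \<Rightarrow> bool" where
  "standard_word \<alpha> \<beta> w \<longleftrightarrow> word_of_shape \<alpha> \<beta> w \<and> word_tableau \<alpha> \<beta> w \<in> SET \<alpha> \<beta>"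

lemma skew_cells_eq_Sigma:
  "skew_cells \<alpha> \<beta> = (SIGMA r:{1..length \<alpha>}. {\<beta> ! (r - 1)<..\<alpha> ! (r - 1)})"
  by (auto simp: skew_cells_def)

lemma skew_size_eq_sum: "skew_size \<alpha> \<beta> = (\<Sum>r=1..length \<alpha>. \<alpha> ! (r - 1) - \<beta> ! (r - 1))"
  by (simp add: skew_size_def skew_cells_eq_Sigma)

lemma skew_row_eq:
  "r \<in> {1..length \<alpha>} \<Longrightarrow> {x \<in> skew_cells \<alpha> \<beta>. fst x = r} = {r} \<times> {\<beta> ! (r - 1)<..\<alpha> ! (r - 1)}"
  by (auto simp: skew_cells_def)

lemma length_word_of_shape:
  assumes "word_of_shape \<alpha> \<beta> w"
  shows "length w = skew_size \<alpha> \<beta>"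
proof -
  have "length w = (\<Sum>r=1..length \<alpha>. count_list w r)"
    using assms sum_count_set[of w "{1..length \<alpha>}"] by (simp add: word_of_shape_def)
  also have "\<dots> = skew_size \<alpha> \<beta>"
    using assms unfolding word_of_shape_def skew_size_eq_sum by (intro sum.cong) auto
  finally show ?thesis .
qed

lemma row_index_less:
  "x \<in> skew_cells \<alpha> \<beta> \<Longrightarrow> row_index \<beta> x < \<alpha> ! (fst x - 1) - \<beta> ! (fst x - 1)"
  by (auto simp: skew_cells_def row_index_def)

lemma row_index_less_iff:
  "x \<in> skew_cells \<alpha> \<beta> \<Longrightarrow> y \<in> skew_cells \<alpha> \<beta> \<Longrightarrow> fst x = fst y \<Longrightarrow>
    row_index \<beta> x < row_index \<beta> y \<longleftrightarrow> snd x < snd y"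
  by (auto simp: skew_cells_def row_index_def)

lemma row_index_inj:
  "x \<in> skew_cells \<alpha> \<beta> \<Longrightarrow> y \<in> skew_cells \<alpha> \<beta> \<Longrightarrow> fst x = fst y \<Longrightarrow>
    row_index \<beta> x = row_index \<beta> y \<Longrightarrow> x = y"
  by (auto simp: skew_cells_def row_index_def prod_eq_iff)

lemma card_row_before:
  assumes "x \<in> skew_cells \<alpha> \<beta>"
  shows "card {y \<in> skew_cells \<alpha> \<beta>. fst y = fst x \<and> snd y < snd x} = row_index \<beta> x"
proof -
  have "{y \<in> skew_cells \<alpha> \<beta>. fst y = fst x \<and> snd y < snd x} = {fst x} \<times> {\<beta> ! (fst x - 1)<..<snd x}"
    using assms by (auto simp: skew_cells_def)
  then show ?thesis by (simp add: row_index_def)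
qed

lemma row_of_eq:
  "inj_on T (skew_cells \<alpha> \<beta>) \<Longrightarrow> x \<in> skew_cells \<alpha> \<beta> \<Longrightarrow> row_of \<alpha> \<beta> T (T x) = fst x"
  unfolding row_of_def by (rule arg_cong[where f = fst], rule the_equality) (auto dest: inj_onD)

lemma count_list_map_upt:
  "count_list (map f [a..<b]) r = card {v \<in> {a..<b}. f v = r}"
proof -
  have "count_list (map f [a..<b]) r = length (filter (\<lambda>v. f v = r) [a..<b])"
    by (induction b) auto
  also have "\<dots> = card {v \<in> {a..<b}. f v = r}"
    by (subst distinct_card[symmetric]) auto
  finally show ?thesis .
qed

lemma SET_row_increasing:
  "T \<in> SET \<alpha> \<beta> \<Longrightarrow> x \<in> skew_cells \<alpha> \<beta> \<Longrightarrow> y \<in> skew_cells \<alpha> \<beta> \<Longrightarrow>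
    fst x = fst y \<Longrightarrow> snd x < snd y \<Longrightarrow> T x < T y"
  by (simp add: SET_def)

lemma SET_bij: "T \<in> SET \<alpha> \<beta> \<Longrightarrow> bij_betw T (skew_cells \<alpha> \<beta>) {1..skew_size \<alpha> \<beta>}"
  by (simp add: SET_def)

lemma SET_entries_in_row_eq_image:
  assumes T: "T \<in> SET \<alpha> \<beta>" and m: "m \<le> skew_size \<alpha> \<beta>"
  shows "{v \<in> {1..m}. row_of \<alpha> \<beta> T v = r} = T ` {y \<in> skew_cells \<alpha> \<beta>. fst y = r \<and> T y \<le> m}"
proof
  have bij: "bij_betw T (skew_cells \<alpha> \<beta>) {1..skew_size \<alpha> \<beta>}" by (rule SET_bij[OF T])
  then have inj: "inj_on T (skew_cells \<alpha> \<beta>)" by (rule bij_betw_imp_inj_on)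
  show "{v \<in> {1..m}. row_of \<alpha> \<beta> T v = r} \<subseteq> T ` {y \<in> skew_cells \<alpha> \<beta>. fst y = r \<and> T y \<le> m}"
  proof
    fix v assume v: "v \<in> {v \<in> {1..m}. row_of \<alpha> \<beta> T v = r}"
    then have "v \<in> T ` skew_cells \<alpha> \<beta>" using m bij by (auto simp: bij_betw_def)
    then obtain y where y: "y \<in> skew_cells \<alpha> \<beta>" "T y = v" by (metis imageE)
    then show "v \<in> T ` {y \<in> skew_cells \<alpha> \<beta>. fst y = r \<and> T y \<le> m}"
      using v row_of_eq[OF inj y(1)] by force
  qed
  show "T ` {y \<in> skew_cells \<alpha> \<beta>. fst y = r \<and> T y \<le> m} \<subseteq> {v \<in> {1..m}. row_of \<alpha> \<beta> T v = r}"
    using bij row_of_eq[OF inj] by (auto simp: bij_betw_def)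
qed

lemma count_list_take_row_word:
  assumes T: "T \<in> SET \<alpha> \<beta>" and m: "m \<le> skew_size \<alpha> \<beta>"
  shows "count_list (take m (row_word \<alpha> \<beta> T)) r = card {y \<in> skew_cells \<alpha> \<beta>. fst y = r \<and> T y \<le> m}"
proof -
  have "count_list (take m (row_word \<alpha> \<beta> T)) r = card {i \<in> {0..<m}. row_of \<alpha> \<beta> T (Suc i) = r}"
    using m by (simp add: row_word_def take_map count_list_map_upt)
  also have "\<dots> = card (Suc ` {i \<in> {0..<m}. row_of \<alpha> \<beta> T (Suc i) = r})"
    by (simp add: card_image)
  also have "Suc ` {i \<in> {0..<m}. row_of \<alpha> \<beta> T (Suc i) = r} = {v \<in> {1..m}. row_of \<alpha> \<beta> T v = r}"
  proof (rule set_eqI)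
    fix v
    show "v \<in> Suc ` {i \<in> {0..<m}. row_of \<alpha> \<beta> T (Suc i) = r} \<longleftrightarrow> v \<in> {v \<in> {1..m}. row_of \<alpha> \<beta> T v = r}"
      by (cases v) auto
  qed
  also have "\<dots> = T ` {y \<in> skew_cells \<alpha> \<beta>. fst y = r \<and> T y \<le> m}"
    by (rule SET_entries_in_row_eq_image[OF T m])
  also have "card \<dots> = card {y \<in> skew_cells \<alpha> \<beta>. fst y = r \<and> T y \<le> m}"
    by (rule card_image, rule inj_on_subset[OF bij_betw_imp_inj_on[OF SET_bij[OF T]]]) auto
  finally show ?thesis .
qed

lemma count_list_take_row_word_cell:
  assumes T: "T \<in> SET \<alpha> \<beta>" and x: "x \<in> skew_cells \<alpha> \<beta>"
  shows "count_list (take (T x - 1) (row_word \<alpha> \<beta> T)) (fst x) = row_index \<beta> x"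
proof -
  have Tx: "1 \<le> T x" "T x \<le> skew_size \<alpha> \<beta>" using SET_bij[OF T] x by (auto simp: bij_betw_def)
  have "{y \<in> skew_cells \<alpha> \<beta>. fst y = fst x \<and> T y \<le> T x - 1}
      = {y \<in> skew_cells \<alpha> \<beta>. fst y = fst x \<and> snd y < snd x}"
  proof (intro Collect_cong conj_cong refl)
    fix y assume y: "y \<in> skew_cells \<alpha> \<beta>" "fst y = fst x"
    show "T y \<le> T x - 1 \<longleftrightarrow> snd y < snd x"
    proof (cases "snd y" "snd x" rule: linorder_cases)
      case less
      then show ?thesis using SET_row_increasing[OF T y(1) x y(2)] by simp
    next
      case equal
      then have "y = x" using y by (simp add: prod_eq_iff)
      then show ?thesis using equal Tx by auto
    next
      case greater
      then show ?thesis using SET_row_increasing[OF T x y(1) y(2)[symmetric]] by simp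
    qed
  qed
  moreover have "T x - 1 \<le> skew_size \<alpha> \<beta>" using Tx by auto
  ultimately show ?thesis
    using count_list_take_row_word[OF T, of "T x - 1" "fst x"] card_row_before[OF x] by simp
qed

lemma word_of_shape_row_word:
  assumes T: "T \<in> SET \<alpha> \<beta>"
  shows "word_of_shape \<alpha> \<beta> (row_word \<alpha> \<beta> T)"
  unfolding word_of_shape_def
proof
  have bij: "bij_betw T (skew_cells \<alpha> \<beta>) {1..skew_size \<alpha> \<beta>}" by (rule SET_bij[OF T])
  then have inj: "inj_on T (skew_cells \<alpha> \<beta>)" by (rule bij_betw_imp_inj_on)
  show "set (row_word \<alpha> \<beta> T) \<subseteq> {1..length \<alpha>}"
  proof
    fix r assume "r \<in> set (row_word \<alpha> \<beta> T)"
    then obtain i where "i < skew_size \<alpha> \<beta>" "r = row_of \<alpha> \<beta> T (Suc i)"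
      by (auto simp: row_word_def)
    moreover from this(1) have "Suc i \<in> T ` skew_cells \<alpha> \<beta>" using bij by (auto simp: bij_betw_def)
    then obtain y where "y \<in> skew_cells \<alpha> \<beta>" "Suc i = T y" by blast
    ultimately show "r \<in> {1..length \<alpha>}" using row_of_eq[OF inj] by (auto simp: skew_cells_def)
  qed
  show "\<forall>r\<in>{1..length \<alpha>}. count_list (row_word \<alpha> \<beta> T) r = \<alpha> ! (r - 1) - \<beta> ! (r - 1)"
  proof
    fix r assume r: "r \<in> {1..length \<alpha>}"
    have "count_list (row_word \<alpha> \<beta> T) r = count_list (take (skew_size \<alpha> \<beta>) (row_word \<alpha> \<beta> T)) r"
      by (simp add: row_word_def)
    also have "\<dots> = card {y \<in> skew_cells \<alpha> \<beta>. fst y = r \<and> T y \<le> skew_size \<alpha> \<beta>}"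
      by (rule count_list_take_row_word[OF T]) simp
    also have "{y \<in> skew_cells \<alpha> \<beta>. fst y = r \<and> T y \<le> skew_size \<alpha> \<beta>} = {y \<in> skew_cells \<alpha> \<beta>. fst y = r}"
      using bij by (auto simp: bij_betw_def)
    finally show "count_list (row_word \<alpha> \<beta> T) r = \<alpha> ! (r - 1) - \<beta> ! (r - 1)"
      using skew_row_eq[OF r] by simp
  qed
qed

lemma word_tableau_eq:
  "x \<in> skew_cells \<alpha> \<beta> \<Longrightarrow> nth_occurrence w (fst x) (row_index \<beta> x) p \<Longrightarrow> word_tableau \<alpha> \<beta> w x = Suc p"
  unfolding word_tableau_def by (simp, rule the_equality, assumption, erule nth_occurrence_unique)

lemma word_tableau_row_word:
  assumes T: "T \<in> SET \<alpha> \<beta>"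
  shows "word_tableau \<alpha> \<beta> (row_word \<alpha> \<beta> T) = T"
proof
  fix x
  show "word_tableau \<alpha> \<beta> (row_word \<alpha> \<beta> T) x = T x"
  proof (cases "x \<in> skew_cells \<alpha> \<beta>")
    case False
    then show ?thesis using T by (cases x) (simp add: word_tableau_def SET_def)
  next
    case x: True
    have "1 \<le> T x" "T x \<le> skew_size \<alpha> \<beta>" using SET_bij[OF T] x by (auto simp: bij_betw_def)
    then have Tx: "T x - 1 < skew_size \<alpha> \<beta>" "Suc (T x - 1) = T x" by linarith+
    have "row_word \<alpha> \<beta> T ! (T x - 1) = fst x"
      using Tx row_of_eq[OF bij_betw_imp_inj_on[OF SET_bij[OF T]] x] by (simp add: row_word_def)
    then have "nth_occurrence (row_word \<alpha> \<beta> T) (fst x) (row_index \<beta> x) (T x - 1)"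
      using Tx count_list_take_row_word_cell[OF T x] by (simp add: nth_occurrence_def row_word_def)
    then show ?thesis using word_tableau_eq[OF x] Tx by simp
  qed
qed

lemma word_tableau_nth_occurrence:
  assumes w: "word_of_shape \<alpha> \<beta> w" and x: "x \<in> skew_cells \<alpha> \<beta>"
  shows "nth_occurrence w (fst x) (row_index \<beta> x) (word_tableau \<alpha> \<beta> w x - 1)"
    and "0 < word_tableau \<alpha> \<beta> w x"
proof -
  have "fst x \<in> {1..length \<alpha>}" using x by (auto simp: skew_cells_def)
  then have "row_index \<beta> x < count_list w (fst x)"
    using w row_index_less[OF x] by (simp add: word_of_shape_def)
  from nth_occurrence_exists[OF this] obtain p where p: "nth_occurrence w (fst x) (row_index \<beta> x) p" ..
  then show "nth_occurrence w (fst x) (row_index \<beta> x) (word_tableau \<alpha> \<beta> w x - 1)"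
    and "0 < word_tableau \<alpha> \<beta> w x"
    using word_tableau_eq[OF x p] by simp_all
qed

lemma bij_betw_word_tableau:
  assumes w: "word_of_shape \<alpha> \<beta> w"
  shows "bij_betw (word_tableau \<alpha> \<beta> w) (skew_cells \<alpha> \<beta>) {1..skew_size \<alpha> \<beta>}"
proof -
  let ?T = "word_tableau \<alpha> \<beta> w"
  have inj: "inj_on ?T (skew_cells \<alpha> \<beta>)"
  proof (rule inj_onI)
    fix x y assume x: "x \<in> skew_cells \<alpha> \<beta>" and y: "y \<in> skew_cells \<alpha> \<beta>" and "?T x = ?T y"
    then have "nth_occurrence w (fst x) (row_index \<beta> x) (?T x - 1)"
      and "nth_occurrence w (fst y) (row_index \<beta> y) (?T x - 1)"
      using word_tableau_nth_occurrence(1)[OF w x] word_tableau_nth_occurrence(1)[OF w y] by simp_all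
    then have "fst x = fst y" "row_index \<beta> x = row_index \<beta> y" by (auto simp: nth_occurrence_def)
    then show "x = y" using row_index_inj[OF x y] by simp
  qed
  have sub: "?T ` skew_cells \<alpha> \<beta> \<subseteq> {1..skew_size \<alpha> \<beta>}"
  proof
    fix v assume "v \<in> ?T ` skew_cells \<alpha> \<beta>"
    then obtain x where x: "x \<in> skew_cells \<alpha> \<beta>" "v = ?T x" by blast
    have "?T x - 1 < length w"
      using word_tableau_nth_occurrence(1)[OF w x(1)] by (simp add: nth_occurrence_def)
    then show "v \<in> {1..skew_size \<alpha> \<beta>}"
      using word_tableau_nth_occurrence(2)[OF w x(1)] x(2) length_word_of_shape[OF w] by simp
  qed
  have "card (?T ` skew_cells \<alpha> \<beta>) = card {1..skew_size \<alpha> \<beta>}"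
    using card_image[OF inj] by (simp add: skew_size_def)
  then have "?T ` skew_cells \<alpha> \<beta> = {1..skew_size \<alpha> \<beta>}"
    using sub by (intro card_subset_eq) auto
  with inj show ?thesis by (simp add: bij_betw_def)
qed

lemma word_tableau_row_increasing:
  assumes w: "word_of_shape \<alpha> \<beta> w" and x: "x \<in> skew_cells \<alpha> \<beta>" and y: "y \<in> skew_cells \<alpha> \<beta>"
    and "fst x = fst y" and "snd x < snd y"
  shows "word_tableau \<alpha> \<beta> w x < word_tableau \<alpha> \<beta> w y"
proof -
  let ?p = "word_tableau \<alpha> \<beta> w x - 1" and ?q = "word_tableau \<alpha> \<beta> w y - 1"
  have p: "nth_occurrence w (fst x) (row_index \<beta> x) ?p"
    and q: "nth_occurrence w (fst x) (row_index \<beta> y) ?q"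
    using word_tableau_nth_occurrence(1)[OF w x] word_tableau_nth_occurrence(1)[OF w y]
      \<open>fst x = fst y\<close> by simp_all
  have "row_index \<beta> x < row_index \<beta> y" using row_index_less_iff[OF x y] assms by simp
  then have "?p < ?q" using nth_occurrence_less_iff[OF p] q by (simp add: nth_occurrence_def)
  then show ?thesis by simp
qed

lemma row_of_word_tableau:
  assumes w: "word_of_shape \<alpha> \<beta> w" and q: "q < length w"
  shows "row_of \<alpha> \<beta> (word_tableau \<alpha> \<beta> w) (Suc q) = w ! q"
proof -
  have bij: "bij_betw (word_tableau \<alpha> \<beta> w) (skew_cells \<alpha> \<beta>) {1..skew_size \<alpha> \<beta>}"
    by (rule bij_betw_word_tableau[OF w])
  have "Suc q \<in> word_tableau \<alpha> \<beta> w ` skew_cells \<alpha> \<beta>"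
    using bij q length_word_of_shape[OF w] by (simp add: bij_betw_def)
  then obtain x where x: "x \<in> skew_cells \<alpha> \<beta>" "word_tableau \<alpha> \<beta> w x = Suc q" by force
  then have "w ! q = fst x"
    using word_tableau_nth_occurrence(1)[OF w x(1)] by (simp add: nth_occurrence_def)
  then show ?thesis using row_of_eq[OF bij_betw_imp_inj_on[OF bij] x(1)] x(2) by simp
qed

lemma row_word_word_tableau:
  "word_of_shape \<alpha> \<beta> w \<Longrightarrow> row_word \<alpha> \<beta> (word_tableau \<alpha> \<beta> w) = w"
  by (rule nth_equalityI) (simp_all add: row_word_def length_word_of_shape row_of_word_tableau)

lemma inj_on_word_tableau: "inj_on (word_tableau \<alpha> \<beta>) {w. word_of_shape \<alpha> \<beta> w}"
  by (rule inj_on_inverseI[where g = "row_word \<alpha> \<beta>"]) (simp add: row_word_word_tableau)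

lemma SET_eq_image_word_tableau: "SET \<alpha> \<beta> = word_tableau \<alpha> \<beta> ` {w. standard_word \<alpha> \<beta> w}"
proof
  show "SET \<alpha> \<beta> \<subseteq> word_tableau \<alpha> \<beta> ` {w. standard_word \<alpha> \<beta> w}"
  proof
    fix T assume T: "T \<in> SET \<alpha> \<beta>"
    then have "standard_word \<alpha> \<beta> (row_word \<alpha> \<beta> T)"
      by (simp add: standard_word_def word_of_shape_row_word word_tableau_row_word)
    then show "T \<in> word_tableau \<alpha> \<beta> ` {w. standard_word \<alpha> \<beta> w}"
      using word_tableau_row_word[OF T] by (metis imageI mem_Collect_eq)
  qed
qed (auto simp: standard_word_def)

lemma word_tableau_in_SET_iff:
  assumes "word_of_shape \<alpha> \<beta> w"
  shows "word_tableau \<alpha> \<beta> w \<in> SET \<alpha> \<beta> \<longleftrightarrow>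
    (\<forall>x\<in>skew_cells \<alpha> \<beta>. \<forall>y\<in>skew_cells \<alpha> \<beta>.
       snd x = snd y \<and> fst x < fst y \<longrightarrow> word_tableau \<alpha> \<beta> w x < word_tableau \<alpha> \<beta> w y)"
proof -
  have "\<forall>x. x \<notin> skew_cells \<alpha> \<beta> \<longrightarrow> word_tableau \<alpha> \<beta> w x = 0"
    by (simp add: word_tableau_def)
  moreover have "\<forall>x\<in>skew_cells \<alpha> \<beta>. \<forall>y\<in>skew_cells \<alpha> \<beta>.
      fst x = fst y \<and> snd x < snd y \<longrightarrow> word_tableau \<alpha> \<beta> w x < word_tableau \<alpha> \<beta> w y"
    using word_tableau_row_increasing[OF assms] by blast
  ultimately show ?thesis
    using bij_betw_word_tableau[OF assms] unfolding SET_def by simp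
qed

section \<open>The operators pi_i on row words\<close>

lemma count_list_swap: "count_list (xs @ a # b # ys) = count_list (xs @ b # a # ys)"
  by (auto simp: fun_eq_iff)

lemma word_of_shape_swap:
  "word_of_shape \<alpha> \<beta> (xs @ a # b # ys) \<longleftrightarrow> word_of_shape \<alpha> \<beta> (xs @ b # a # ys)"
  by (simp add: word_of_shape_def count_list_swap insert_commute)

lemma swap_entries_word_tableau:
  assumes w: "word_of_shape \<alpha> \<beta> (xs @ a # b # ys)" and "a \<noteq> b"
  shows "swap_entries (Suc (length xs)) (word_tableau \<alpha> \<beta> (xs @ a # b # ys))
    = word_tableau \<alpha> \<beta> (xs @ b # a # ys)"
proof
  fix x
  show "swap_entries (Suc (length xs)) (word_tableau \<alpha> \<beta> (xs @ a # b # ys)) x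
      = word_tableau \<alpha> \<beta> (xs @ b # a # ys) x"
  proof (cases "x \<in> skew_cells \<alpha> \<beta>")
    case False
    then show ?thesis by (simp add: swap_entries_def word_tableau_def)
  next
    case x: True
    let ?p = "word_tableau \<alpha> \<beta> (xs @ a # b # ys) x - 1"
    have p: "nth_occurrence (xs @ a # b # ys) (fst x) (row_index \<beta> x) ?p"
      and pos: "0 < word_tableau \<alpha> \<beta> (xs @ a # b # ys) x"
      using word_tableau_nth_occurrence[OF w x] by auto
    have "word_tableau \<alpha> \<beta> (xs @ b # a # ys) x
        = Suc (if ?p = length xs then Suc ?p else if ?p = Suc (length xs) then length xs else ?p)"
      using word_tableau_eq[OF x nth_occurrence_swap[OF \<open>a \<noteq> b\<close> p]] .
    then show ?thesis using pos by (auto simp: swap_entries_def)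
  qed
qed

lemma word_tableau_eq_iff:
  "word_of_shape \<alpha> \<beta> u \<Longrightarrow> word_of_shape \<alpha> \<beta> w \<Longrightarrow>
    word_tableau \<alpha> \<beta> u = word_tableau \<alpha> \<beta> w \<longleftrightarrow> u = w"
  using inj_onD[OF inj_on_word_tableau, of \<alpha> \<beta> u w] by auto

lemma pi_step_word_tableau_swap:
  assumes u: "standard_word \<alpha> \<beta> (xs @ b # a # ys)" and "a < b"
  shows "(word_tableau \<alpha> \<beta> (xs @ b # a # ys), word_tableau \<alpha> \<beta> (xs @ a # b # ys)) \<in> pi_step \<alpha> \<beta>"
proof -
  let ?u = "xs @ b # a # ys" and ?i = "Suc (length xs)"
  have su: "word_of_shape \<alpha> \<beta> ?u" and U: "word_tableau \<alpha> \<beta> ?u \<in> SET \<alpha> \<beta>"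
    using u by (simp_all add: standard_word_def)
  have rows: "row_of \<alpha> \<beta> (word_tableau \<alpha> \<beta> ?u) ?i = b"
      "row_of \<alpha> \<beta> (word_tableau \<alpha> \<beta> ?u) (?i + 1) = a"
    using row_of_word_tableau[OF su, of "length xs"] row_of_word_tableau[OF su, of "Suc (length xs)"]
    by (simp_all add: nth_append)
  have "swap_entries ?i (word_tableau \<alpha> \<beta> ?u) = word_tableau \<alpha> \<beta> (xs @ a # b # ys)"
    using swap_entries_word_tableau[OF su] \<open>a < b\<close> by simp
  then have "pi_op \<alpha> \<beta> ?i (word_tableau \<alpha> \<beta> ?u) = Some (word_tableau \<alpha> \<beta> (xs @ a # b # ys))"
    using rows \<open>a < b\<close> by (simp add: pi_op_def)
  moreover have "?i \<le> skew_size \<alpha> \<beta> - 1" using length_word_of_shape[OF su] by simp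
  ultimately show ?thesis using U unfolding pi_step_def by auto
qed

lemma pi_step_word_tableau_elim:
  assumes su: "word_of_shape \<alpha> \<beta> u" and sw: "word_of_shape \<alpha> \<beta> w"
    and step: "(word_tableau \<alpha> \<beta> u, word_tableau \<alpha> \<beta> w) \<in> pi_step \<alpha> \<beta>"
    and ne: "word_tableau \<alpha> \<beta> u \<noteq> word_tableau \<alpha> \<beta> w"
  obtains xs a b ys where "u = xs @ b # a # ys" "w = xs @ a # b # ys" "a < b"
proof -
  let ?U = "word_tableau \<alpha> \<beta> u"
  obtain i where i: "1 \<le> i" "i \<le> skew_size \<alpha> \<beta> - 1"
    and op: "pi_op \<alpha> \<beta> i ?U = Some (word_tableau \<alpha> \<beta> w)"
    using step by (auto simp: pi_step_def)
  obtain p where ip: "i = Suc p" using i(1) by (cases i) auto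
  have p: "Suc p < length u" using i ip length_word_of_shape[OF su] by linarith
  obtain xs b a ys where u_eq: "u = xs @ b # a # ys" and len: "length xs = p"
  proof
    show "u = take p u @ u ! p # u ! Suc p # drop (Suc (Suc p)) u"
      using p by (simp add: Cons_nth_drop_Suc)
  qed (use p in simp)
  have rows: "row_of \<alpha> \<beta> ?U i = b" "row_of \<alpha> \<beta> ?U (i + 1) = a"
    using row_of_word_tableau[OF su, of p] row_of_word_tableau[OF su, of "Suc p"] p ip u_eq len
    by (simp_all add: nth_append)
  have lt: "a < b" and sw_eq: "word_tableau \<alpha> \<beta> w = swap_entries i ?U"
    using op ne unfolding pi_op_def rows by (auto split: if_splits)
  have "word_tableau \<alpha> \<beta> w = word_tableau \<alpha> \<beta> (xs @ a # b # ys)"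
    using sw_eq swap_entries_word_tableau[of \<alpha> \<beta> xs b a ys] su u_eq lt ip len by simp
  moreover have "word_of_shape \<alpha> \<beta> (xs @ a # b # ys)"
    using word_of_shape_swap[of \<alpha> \<beta> xs b a ys] su u_eq by simp
  ultimately have "w = xs @ a # b # ys"
    using word_tableau_eq_iff[OF sw] by blast
  with u_eq lt show thesis by (intro that)
qed

lemma minimal_SET_iff:
  "T \<in> minimal_SET \<alpha> \<beta> \<longleftrightarrow> T \<in> SET \<alpha> \<beta> \<and> \<not> (\<exists>U. (U, T) \<in> pi_step \<alpha> \<beta> \<and> U \<noteq> T)"
proof -
  have "\<exists>U. (U, T) \<in> pi_step \<alpha> \<beta> \<and> U \<noteq> T" if "(T', T) \<in> (pi_step \<alpha> \<beta>)\<^sup>*" "T' \<noteq> T" for T'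
    using that by (induction rule: rtrancl_induct) blast+
  moreover have "U \<in> SET \<alpha> \<beta>" if "(U, T) \<in> pi_step \<alpha> \<beta>" for U
    using that by (simp add: pi_step_def)
  ultimately show ?thesis unfolding minimal_SET_def set_le_def by blast
qed

lemma pi_step_predecessor_iff:
  assumes w: "standard_word \<alpha> \<beta> w"
  shows "(\<exists>U. (U, word_tableau \<alpha> \<beta> w) \<in> pi_step \<alpha> \<beta> \<and> U \<noteq> word_tableau \<alpha> \<beta> w) \<longleftrightarrow>
    (\<exists>xs a b ys. w = xs @ a # b # ys \<and> a < b \<and> standard_word \<alpha> \<beta> (xs @ b # a # ys))"
proof
  assume "\<exists>U. (U, word_tableau \<alpha> \<beta> w) \<in> pi_step \<alpha> \<beta> \<and> U \<noteq> word_tableau \<alpha> \<beta> w"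
  then obtain U where step: "(U, word_tableau \<alpha> \<beta> w) \<in> pi_step \<alpha> \<beta>"
    and ne: "U \<noteq> word_tableau \<alpha> \<beta> w" by blast
  then have "U \<in> SET \<alpha> \<beta>" by (simp add: pi_step_def)
  then obtain u where u: "standard_word \<alpha> \<beta> u" and U: "U = word_tableau \<alpha> \<beta> u"
    using SET_eq_image_word_tableau by blast
  obtain xs a b ys where "u = xs @ b # a # ys" "w = xs @ a # b # ys" "a < b"
    by (rule pi_step_word_tableau_elim[of \<alpha> \<beta> u w]) (use u w step ne U in \<open>simp_all add: standard_word_def\<close>)
  with u show "\<exists>xs a b ys. w = xs @ a # b # ys \<and> a < b \<and> standard_word \<alpha> \<beta> (xs @ b # a # ys)"
    by blast
next
  assume "\<exists>xs a b ys. w = xs @ a # b # ys \<and> a < b \<and> standard_word \<alpha> \<beta> (xs @ b # a # ys)"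
  then obtain xs a b ys where w_eq: "w = xs @ a # b # ys" and "a < b"
    and u: "standard_word \<alpha> \<beta> (xs @ b # a # ys)" by blast
  have "xs @ b # a # ys \<noteq> w" using w_eq \<open>a < b\<close> by simp
  then have "word_tableau \<alpha> \<beta> (xs @ b # a # ys) \<noteq> word_tableau \<alpha> \<beta> w"
    using word_tableau_eq_iff u w by (simp add: standard_word_def)
  with pi_step_word_tableau_swap[OF u \<open>a < b\<close>] w_eq
  show "\<exists>U. (U, word_tableau \<alpha> \<beta> w) \<in> pi_step \<alpha> \<beta> \<and> U \<noteq> word_tableau \<alpha> \<beta> w" by auto
qed

theorem minimal_SET_eq_image_word_tableau:
  "minimal_SET \<alpha> \<beta> = word_tableau \<alpha> \<beta> ` {w. swap_minimal (standard_word \<alpha> \<beta>) w}"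
proof (rule set_eqI)
  fix T
  show "T \<in> minimal_SET \<alpha> \<beta> \<longleftrightarrow> T \<in> word_tableau \<alpha> \<beta> ` {w. swap_minimal (standard_word \<alpha> \<beta>) w}"
  proof (cases "T \<in> SET \<alpha> \<beta>")
    case False
    then have "T \<notin> minimal_SET \<alpha> \<beta>" using minimal_SET_iff by blast
    moreover have "T \<notin> word_tableau \<alpha> \<beta> ` {w. swap_minimal (standard_word \<alpha> \<beta>) w}"
      using False by (auto simp: swap_minimal_def standard_word_def)
    ultimately show ?thesis by blast
  next
    case True
    then obtain w where w: "standard_word \<alpha> \<beta> w" and T: "T = word_tableau \<alpha> \<beta> w"
      using SET_eq_image_word_tableau by blast
    have "T \<in> minimal_SET \<alpha> \<beta> \<longleftrightarrow> swap_minimal (standard_word \<alpha> \<beta>) w"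
      using minimal_SET_iff pi_step_predecessor_iff[OF w] True w unfolding T swap_minimal_def by blast
    moreover have "T \<in> word_tableau \<alpha> \<beta> ` {w. swap_minimal (standard_word \<alpha> \<beta>) w}
        \<longleftrightarrow> swap_minimal (standard_word \<alpha> \<beta>) w"
    proof
      assume "T \<in> word_tableau \<alpha> \<beta> ` {w. swap_minimal (standard_word \<alpha> \<beta>) w}"
      then obtain v where v: "v \<in> {w. swap_minimal (standard_word \<alpha> \<beta>) w}" "T = word_tableau \<alpha> \<beta> v"
        by (rule imageE)
      have "word_tableau \<alpha> \<beta> v = word_tableau \<alpha> \<beta> w" using v(2) T by simp
      then have "v = w"
        using word_tableau_eq_iff[of \<alpha> \<beta> v w] v(1) w by (simp add: swap_minimal_def standard_word_def)
      with v(1) show "swap_minimal (standard_word \<alpha> \<beta>) w" by simp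
    qed (use T in blast)
    ultimately show ?thesis by blast
  qed
qed

section \<open>Row words of the right lobster\<close>

lemma lobster_cell_iff:
  "(r, col) \<in> skew_cells (lobster_alpha b c1 c2) (lobster_beta b) \<longleftrightarrow>
     r = 1 \<and> b + 1 < col \<and> col \<le> b + 1 + c2 \<or>
     r = 2 \<and> 1 < col \<and> col \<le> b + 1 \<or>
     r = 3 \<and> b + 1 < col \<and> col \<le> b + 1 + c1"
proof -
  have "1 \<le> r \<and> r \<le> 3 \<longleftrightarrow> r = 1 \<or> r = 2 \<or> r = 3" by auto
  then show ?thesis
    by (auto simp: skew_cells_def lobster_alpha_def lobster_beta_def)
qed

lemma lobster_row_index:
  "row_index (lobster_beta b) (r, col) = (if r = 2 then col - 2 else col - b - 2)"
  if "r = 1 \<or> r = 2 \<or> r = 3"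
  using that by (auto simp: row_index_def lobster_beta_def)

lemma word_of_shape_lobster_iff:
  "word_of_shape (lobster_alpha b c1 c2) (lobster_beta b) w \<longleftrightarrow>
     set w \<subseteq> {1, 2, 3} \<and> count_list w 1 = c2 \<and> count_list w 2 = b \<and> count_list w 3 = c1"
proof -
  have "{1..length (lobster_alpha b c1 c2)} = {1, 2, 3}" by (auto simp: lobster_alpha_def)
  then show ?thesis
    by (simp add: word_of_shape_def lobster_alpha_def lobster_beta_def)
qed

text \<open>Rows 1 and 3 share columns exactly at their first min c1 c2 cells; the ballot condition is
  column strictness there.\<close>

definition lobster_word :: "nat \<Rightarrow> nat \<Rightarrow> nat \<Rightarrow> nat list \<Rightarrow> bool" where
  "lobster_word b c1 c2 w \<longleftrightarrow>
     set w \<subseteq> {1, 2, 3} \<and> count_list w 1 = c2 \<and> count_list w 2 = b \<and> count_list w 3 = c1 \<and>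
     ballot (min c1 c2) w"

lemma lobster_same_column:
  assumes "x \<in> skew_cells (lobster_alpha b c1 c2) (lobster_beta b)"
    and "y \<in> skew_cells (lobster_alpha b c1 c2) (lobster_beta b)"
    and "snd x = snd y" and "fst x < fst y"
  obtains k where "k < min c1 c2" and "x = (1, b + 2 + k)" and "y = (3, b + 2 + k)"
proof -
  obtain r col r' where x: "x = (r, col)" and y: "y = (r', col)"
    using assms(3) by (cases x, cases y) auto
  have rows: "r = 1" "r' = 3" and col: "b + 1 < col" "col \<le> b + 1 + min c1 c2"
    using assms unfolding x y lobster_cell_iff by auto
  define k where "k = col - b - 2"
  have "k < min c1 c2" "col = b + 2 + k" using col unfolding k_def by linarith+
  with rows x y show thesis by (intro that) simp_all
qed

lemma lobster_columns_iff_ballot: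
  assumes w: "word_of_shape (lobster_alpha b c1 c2) (lobster_beta b) w"
  defines "cells \<equiv> skew_cells (lobster_alpha b c1 c2) (lobster_beta b)"
    and "T \<equiv> word_tableau (lobster_alpha b c1 c2) (lobster_beta b) w"
  shows "(\<forall>x\<in>cells. \<forall>y\<in>cells. snd x = snd y \<and> fst x < fst y \<longrightarrow> T x < T y) \<longleftrightarrow>
    ballot (min c1 c2) w"
proof -
  have counts: "count_list w 1 = c2" "count_list w 3 = c1"
    using w by (simp_all add: word_of_shape_lobster_iff)
  have "(\<forall>x\<in>cells. \<forall>y\<in>cells. snd x = snd y \<and> fst x < fst y \<longrightarrow> T x < T y) \<longleftrightarrow>
    (\<forall>k p q. k < min c1 c2 \<longrightarrow> nth_occurrence w 1 k p \<longrightarrow> nth_occurrence w 3 k q \<longrightarrow> p < q)"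
  proof (intro iffI allI impI ballI)
    fix k p q
    assume cols: "\<forall>x\<in>cells. \<forall>y\<in>cells. snd x = snd y \<and> fst x < fst y \<longrightarrow> T x < T y"
      and "k < min c1 c2" and p: "nth_occurrence w 1 k p" and q: "nth_occurrence w 3 k q"
    let ?x = "(1::nat, b + 2 + k)" and ?y = "(3::nat, b + 2 + k)"
    have x: "?x \<in> cells" and y: "?y \<in> cells"
      using \<open>k < min c1 c2\<close> by (simp_all add: cells_def lobster_cell_iff)
    have "T ?x = Suc p" "T ?y = Suc q"
      using word_tableau_eq[OF x[unfolded cells_def]] word_tableau_eq[OF y[unfolded cells_def]] p q
      by (simp_all add: T_def lobster_row_index)
    moreover have "T ?x < T ?y" using bspec[OF bspec[OF cols x] y] by simp
    ultimately show "p < q" by linarith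
  next
    fix x y
    assume occ: "\<forall>k p q. k < min c1 c2 \<longrightarrow> nth_occurrence w 1 k p \<longrightarrow> nth_occurrence w 3 k q \<longrightarrow> p < q"
      and x: "x \<in> cells" and y: "y \<in> cells" and "snd x = snd y \<and> fst x < fst y"
    then obtain k where k: "k < min c1 c2" "x = (1, b + 2 + k)" "y = (3, b + 2 + k)"
      using lobster_same_column[of x b c1 c2 y] unfolding cells_def by blast
    have "nth_occurrence w 1 k (T x - 1)" "nth_occurrence w 3 k (T y - 1)"
      using word_tableau_nth_occurrence(1)[OF w, of x] word_tableau_nth_occurrence(1)[OF w, of y] x y k
      unfolding cells_def T_def by (simp_all add: lobster_row_index)
    then have "T x - 1 < T y - 1" using occ k(1) by blast
    then show "T x < T y" by simp
  qed
  also have "\<dots> \<longleftrightarrow> ballot (min c1 c2) w"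
    using ballot_iff_nth_occurrence[of "min c1 c2" w] counts by simp
  finally show ?thesis .
qed

lemma standard_word_lobster_iff:
  "standard_word (lobster_alpha b c1 c2) (lobster_beta b) w \<longleftrightarrow> lobster_word b c1 c2 w"
  using lobster_columns_iff_ballot[of b c1 c2 w] word_tableau_in_SET_iff[of "lobster_alpha b c1 c2" "lobster_beta b" w]
  by (auto simp: standard_word_def lobster_word_def word_of_shape_lobster_iff)

section \<open>Minimal row words of the lobster\<close>

lemma lobster_word_Cons_2: "lobster_word (Suc b) c1 c2 (2 # w) \<longleftrightarrow> lobster_word b c1 c2 w"
  by (auto simp: lobster_word_def ballot_Cons_other)

lemma lobster_word_Cons_1_3:
  "lobster_word b (Suc c1) (Suc c2) (1 # 3 # w) \<longleftrightarrow> lobster_word b c1 c2 w"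
  using ballot_Cons_1_3[of "min c1 c2" w] by (auto simp: lobster_word_def)

lemma not_lobster_word_Cons_3: "0 < min c1 c2 \<Longrightarrow> \<not> lobster_word b c1 c2 (3 # w)"
  by (simp add: lobster_word_def not_ballot_Cons_3)

lemma lobster_word_swap:
  assumes "lobster_word b c1 c2 (xs @ x # y # ys)"
    and "min (count_list (xs @ [y]) 3) (min c1 c2) \<le> count_list (xs @ [y]) 1"
  shows "lobster_word b c1 c2 (xs @ y # x # ys)"
proof -
  have "count_list (xs @ y # x # ys) r = count_list (xs @ x # y # ys) r" for r
    by (simp add: count_list_swap)
  then show ?thesis
    using assms ballot_swap[of "min c1 c2" xs x y ys] by (auto simp: lobster_word_def)
qed

lemma swap_minimal_lobster_Cons_2:
  "swap_minimal (lobster_word (Suc b) (Suc c1) (Suc c2)) (2 # w) \<longleftrightarrow>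
    swap_minimal (lobster_word b (Suc c1) (Suc c2)) w"
proof -
  have "\<not> lobster_word (Suc b) (Suc c1) (Suc c2) (a # 2 # v)" if "2 < a" for a v
  proof
    assume lw: "lobster_word (Suc b) (Suc c1) (Suc c2) (a # 2 # v)"
    then have "a = 3" using that by (auto simp: lobster_word_def)
    with lw show False using not_lobster_word_Cons_3[of "Suc c1" "Suc c2"] by simp
  qed
  then show ?thesis
    using swap_minimal_Cons_iff[where P = "lobster_word (Suc b) (Suc c1) (Suc c2)" and x = 2
        and Q = "lobster_word b (Suc c1) (Suc c2)" and w = w]
    by (simp add: lobster_word_Cons_2)
qed

lemma swap_minimal_lobster_Cons_1_3:
  "swap_minimal (lobster_word b (Suc c1) (Suc c2)) (1 # 3 # w) \<longleftrightarrow>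
    swap_minimal (lobster_word b c1 c2) w"
proof -
  let ?P = "lobster_word b (Suc c1) (Suc c2)"
  have "swap_minimal ?P (1 # 3 # w) \<longleftrightarrow> swap_minimal (\<lambda>v. ?P (1 # v)) (3 # w)"
    using swap_minimal_Cons_iff[where P = ?P and x = 1 and Q = "\<lambda>v. ?P (1 # v)" and w = "3 # w"]
      not_lobster_word_Cons_3[of "Suc c1" "Suc c2" b "1 # w"]
    by simp
  also have "\<dots> \<longleftrightarrow> swap_minimal (lobster_word b c1 c2) w"
  proof -
    have "\<not> ?P (1 # a # 3 # v)" if "3 < a" for a v
      using that by (auto simp: lobster_word_def)
    moreover have "swap_minimal (\<lambda>v. ?P (1 # v)) (3 # w) \<longleftrightarrow>
        swap_minimal (lobster_word b c1 c2) w \<and> (\<forall>a v. w = a # v \<longrightarrow> 3 < a \<longrightarrow> \<not> ?P (1 # a # 3 # v))"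
      by (rule swap_minimal_Cons_iff) (rule lobster_word_Cons_1_3)
    ultimately show ?thesis by blast
  qed
  finally show ?thesis .
qed

text \<open>A minimal word cannot start with 1 followed by a letter other than 3: the letter just before
  its first 3 could be exchanged with that 3.\<close>

lemma swap_minimal_lobster_cases:
  assumes "swap_minimal (lobster_word b (Suc c1) (Suc c2)) w"
  obtains v where "w = 2 # v" | v where "w = 1 # 3 # v"
proof -
  let ?P = "lobster_word b (Suc c1) (Suc c2)"
  have P: "?P w" and no_swap: "\<And>xs a c ys. w = xs @ a # c # ys \<Longrightarrow> a < c \<Longrightarrow> \<not> ?P (xs @ c # a # ys)"
    using assms unfolding swap_minimal_def by blast+
  have "count_list w 3 \<noteq> 0" using P by (simp add: lobster_word_def)
  then have "3 \<in> set w" by (simp add: count_list_0_iff)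
  then obtain x w' where w: "w = x # w'" by (cases w) auto
  have "x \<in> {1, 2, 3}" using P w by (auto simp: lobster_word_def)
  moreover have "x \<noteq> 3" using P w not_lobster_word_Cons_3[of "Suc c1" "Suc c2" b w'] by auto
  moreover have False if "x = 1" and no_pair: "\<And>v. w' \<noteq> 3 # v"
  proof -
    have "3 \<in> set w'" using \<open>3 \<in> set w\<close> w \<open>x = 1\<close> by simp
    then obtain us vs where w': "w' = us @ 3 # vs" and "3 \<notin> set us"
      by (auto dest: split_list_first)
    then have "us \<noteq> []" using no_pair by auto
    then obtain us' a where us: "us = us' @ [a]" by (metis append_butlast_last_id)
    have w_eq: "w = (1 # us') @ a # 3 # vs" using w w' us \<open>x = 1\<close> by simp
    have "a \<in> {1, 2, 3}" "a \<noteq> 3" using P w_eq \<open>3 \<notin> set us\<close> us by (auto simp: lobster_word_def)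
    then have "a < 3" by auto
    moreover have "count_list (1 # us') 3 = 0" using \<open>3 \<notin> set us\<close> us by simp
    then have "?P ((1 # us') @ 3 # a # vs)"
      using lobster_word_swap[of b "Suc c1" "Suc c2" "1 # us'" a 3 vs] P w_eq by simp
    ultimately show False using no_swap[OF w_eq] by blast
  qed
  ultimately show thesis using that w by (cases w') auto
qed

lemma sorted_wrt_ge_if_no_ascent:
  assumes "\<And>xs a c ys. w = xs @ a # c # ys \<Longrightarrow> c \<le> (a::'a::linorder)"
  shows "sorted_wrt (\<ge>) w"
proof -
  have "w ! Suc i \<le> w ! i" if "Suc i < length w" for i
  proof -
    have "w = take i w @ w ! i # w ! Suc i # drop (Suc (Suc i)) w"
      using that by (simp add: Cons_nth_drop_Suc)
    then show ?thesis by (rule assms)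
  qed
  then show ?thesis by (simp add: sorted_wrt_iff_nth_Suc_transp transp_def)
qed

lemma sorted_wrt_ge_eq_if_mset_eq:
  fixes u v :: "'a::linorder list"
  assumes "sorted_wrt (\<ge>) u" and "sorted_wrt (\<ge>) v" and "mset u = mset v"
  shows "u = v"
proof -
  have "sorted (rev u)" "sorted (rev v)" using assms(1,2) by (simp_all add: sorted_wrt_rev)
  moreover have "mset (rev u) = mset (rev v)" using assms(3) by simp
  ultimately have "rev u = rev v" by (metis properties_for_sort sorted_sort_id)
  then show ?thesis by simp
qed

lemma mset_eq_replicate_count_list:
  assumes "set w \<subseteq> {1, 2, 3}"
  shows "mset w = mset (replicate (count_list w 3) 3 @ replicate (count_list w 2) 2 @
    replicate (count_list w 1) (1::nat))"
proof (rule multiset_eqI)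
  fix r
  show "count (mset w) r = count (mset (replicate (count_list w 3) 3 @ replicate (count_list w 2) 2 @
    replicate (count_list w 1) 1)) r"
  proof (cases "r \<in> {1, 2, 3}")
    case True
    then show ?thesis by (auto simp: count_mset)
  next
    case False
    then have "r \<notin> set w" using assms by auto
    with False show ?thesis by (simp add: count_mset)
  qed
qed

lemma swap_minimal_lobster_degenerate:
  assumes "min c1 c2 = 0"
  shows "swap_minimal (lobster_word b c1 c2) w \<longleftrightarrow> w = replicate c1 3 @ replicate b 2 @ replicate c2 1"
    (is "_ \<longleftrightarrow> w = ?w0")
proof -
  have P: "lobster_word b c1 c2 v \<longleftrightarrow>
      set v \<subseteq> {1, 2, 3} \<and> count_list v 1 = c2 \<and> count_list v 2 = b \<and> count_list v 3 = c1" for v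
    using assms by (simp add: lobster_word_def)
  have "sorted_wrt (\<ge>) (replicate n (x::nat))" for n x
    by (induction n) auto
  then have sorted0: "sorted_wrt (\<ge>) ?w0"
    by (auto simp: sorted_wrt_append)
  have "lobster_word b c1 c2 ?w0" by (auto simp: P)
  moreover have "\<not> a < c" if "?w0 = xs @ a # c # ys" for xs a c ys
    using sorted0 unfolding that by (simp add: sorted_wrt_append)
  ultimately have "swap_minimal (lobster_word b c1 c2) ?w0" by (auto simp: swap_minimal_def)
  moreover have "w = ?w0" if min: "swap_minimal (lobster_word b c1 c2) w"
  proof (rule sorted_wrt_ge_eq_if_mset_eq[OF _ sorted0])
    have Pw: "lobster_word b c1 c2 w" using min by (simp add: swap_minimal_def)
    have "c \<le> a" if w_eq: "w = xs @ a # c # ys" for xs a c ys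
    proof (rule ccontr)
      assume "\<not> c \<le> a"
      moreover have "lobster_word b c1 c2 (xs @ c # a # ys)"
        using lobster_word_swap[of b c1 c2 xs a c ys] Pw w_eq assms by simp
      ultimately show False using min w_eq unfolding swap_minimal_def by auto
    qed
    then show "sorted_wrt (\<ge>) w" by (rule sorted_wrt_ge_if_no_ascent)
    show "mset w = mset ?w0"
      using mset_eq_replicate_count_list[of w] Pw by (simp add: P)
  qed
  ultimately show ?thesis by blast
qed

lemma minimal_lobster_words_0_Suc:
  "{w. swap_minimal (lobster_word 0 (Suc c1) (Suc c2)) w}
    = (@) [1, 3] ` {w. swap_minimal (lobster_word 0 c1 c2) w}"
proof
  show "{w. swap_minimal (lobster_word 0 (Suc c1) (Suc c2)) w}
      \<subseteq> (@) [1, 3] ` {w. swap_minimal (lobster_word 0 c1 c2) w}"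
  proof
    fix w assume "w \<in> {w. swap_minimal (lobster_word 0 (Suc c1) (Suc c2)) w}"
    then have min: "swap_minimal (lobster_word 0 (Suc c1) (Suc c2)) w" by simp
    then show "w \<in> (@) [1, 3] ` {w. swap_minimal (lobster_word 0 c1 c2) w}"
    proof (cases rule: swap_minimal_lobster_cases)
      case (1 v)
      then have "lobster_word 0 (Suc c1) (Suc c2) (2 # v)" using min by (simp add: swap_minimal_def)
      then show ?thesis by (simp add: lobster_word_def)
    next
      case (2 v)
      then have "swap_minimal (lobster_word 0 c1 c2) v"
        using min swap_minimal_lobster_Cons_1_3 by blast
      then show ?thesis using 2 by force
    qed
  qed
  show "(@) [1, 3] ` {w. swap_minimal (lobster_word 0 c1 c2) w}
      \<subseteq> {w. swap_minimal (lobster_word 0 (Suc c1) (Suc c2)) w}"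
    using swap_minimal_lobster_Cons_1_3 by force
qed

lemma minimal_lobster_words_Suc_Suc:
  "{w. swap_minimal (lobster_word (Suc b) (Suc c1) (Suc c2)) w}
    = (@) [2] ` {w. swap_minimal (lobster_word b (Suc c1) (Suc c2)) w}
      \<union> (@) [1, 3] ` {w. swap_minimal (lobster_word (Suc b) c1 c2) w}"
proof
  show "{w. swap_minimal (lobster_word (Suc b) (Suc c1) (Suc c2)) w}
      \<subseteq> (@) [2] ` {w. swap_minimal (lobster_word b (Suc c1) (Suc c2)) w}
        \<union> (@) [1, 3] ` {w. swap_minimal (lobster_word (Suc b) c1 c2) w}"
  proof
    fix w assume "w \<in> {w. swap_minimal (lobster_word (Suc b) (Suc c1) (Suc c2)) w}"
    then have min: "swap_minimal (lobster_word (Suc b) (Suc c1) (Suc c2)) w" by simp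
    then show "w \<in> (@) [2] ` {w. swap_minimal (lobster_word b (Suc c1) (Suc c2)) w}
        \<union> (@) [1, 3] ` {w. swap_minimal (lobster_word (Suc b) c1 c2) w}"
    proof (cases rule: swap_minimal_lobster_cases)
      case (1 v)
      then have "swap_minimal (lobster_word b (Suc c1) (Suc c2)) v"
        using min swap_minimal_lobster_Cons_2 by blast
      then show ?thesis using 1 by force
    next
      case (2 v)
      then have "swap_minimal (lobster_word (Suc b) c1 c2) v"
        using min swap_minimal_lobster_Cons_1_3 by blast
      then show ?thesis using 2 by force
    qed
  qed
  show "(@) [2] ` {w. swap_minimal (lobster_word b (Suc c1) (Suc c2)) w}
        \<union> (@) [1, 3] ` {w. swap_minimal (lobster_word (Suc b) c1 c2) w}
      \<subseteq> {w. swap_minimal (lobster_word (Suc b) (Suc c1) (Suc c2)) w}"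
    using swap_minimal_lobster_Cons_2 swap_minimal_lobster_Cons_1_3 by force
qed

lemma BC_words_Nil: "[] \<in> BC_words nb nc \<longleftrightarrow> nb = 0 \<and> nc = 0"
  by (auto simp: BC_words_def)

lemma BC_words_Cons:
  "x # u \<in> BC_words nb nc \<longleftrightarrow>
    x = B \<and> 0 < nb \<and> u \<in> BC_words (nb - 1) nc \<or> x = C \<and> 0 < nc \<and> u \<in> BC_words nb (nc - 1)"
  by (cases x) (auto simp: BC_words_def)

lemma BC_words_0: "BC_words nb 0 = {replicate nb B}"
proof -
  have "u \<in> BC_words nb 0 \<longleftrightarrow> u = replicate nb B" for u
    by (induction u arbitrary: nb) (auto simp: BC_words_Nil BC_words_Cons split: nat_diff_split)
  then show ?thesis by blast
qed

lemma BC_words_0_Suc: "BC_words 0 (Suc nc) = (@) [C] ` BC_words 0 nc"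
proof -
  have "u \<in> BC_words 0 (Suc nc) \<longleftrightarrow> u \<in> (@) [C] ` BC_words 0 nc" for u
    by (cases u) (auto simp: BC_words_Nil BC_words_Cons)
  then show ?thesis by blast
qed

lemma BC_words_Suc_Suc:
  "BC_words (Suc nb) (Suc nc) = (@) [B] ` BC_words nb (Suc nc) \<union> (@) [C] ` BC_words (Suc nb) nc"
proof -
  have "u \<in> BC_words (Suc nb) (Suc nc) \<longleftrightarrow>
      u \<in> (@) [B] ` BC_words nb (Suc nc) \<union> (@) [C] ` BC_words (Suc nb) nc" for u
    by (cases u) (auto simp: BC_words_Nil BC_words_Cons)
  then show ?thesis by blast
qed

lemma card_BC_words: "card (BC_words nb nc) = (nb + nc) choose nb"
proof (induction nc arbitrary: nb)
  case 0
  then show ?case by (simp add: BC_words_0)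
next
  case (Suc nc)
  note outer = Suc.IH
  show ?case
  proof (induction nb)
    case 0
    then show ?case using outer[of 0] by (simp add: BC_words_0_Suc card_image)
  next
    case (Suc nb)
    note inner = Suc.IH
    have "finite (BC_words nb (Suc nc))" "finite (BC_words (Suc nb) nc)"
      using inner outer[of "Suc nb"] by (auto intro: card_ge_0_finite)
    then have "card (BC_words (Suc nb) (Suc nc))
        = card ((@) [B] ` BC_words nb (Suc nc)) + card ((@) [C] ` BC_words (Suc nb) nc)"
      unfolding BC_words_Suc_Suc by (intro card_Un_disjoint) auto
    also have "\<dots> = card (BC_words nb (Suc nc)) + card (BC_words (Suc nb) nc)"
      by (simp add: card_image)
    finally show ?case using inner outer[of "Suc nb"] by simp
  qed
qed

text \<open>A letter B stands for a cell of the middle row and C for a column shared by rows 1 and 3. Once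
  an outer row is used up, the rest of a minimal word is forced.\<close>

fun lobster_word_of_BC :: "nat \<Rightarrow> nat \<Rightarrow> letter list \<Rightarrow> nat list" where
  "lobster_word_of_BC (Suc c1) (Suc c2) (B # u) = 2 # lobster_word_of_BC (Suc c1) (Suc c2) u"
| "lobster_word_of_BC (Suc c1) (Suc c2) (C # u) = 1 # 3 # lobster_word_of_BC c1 c2 u"
| "lobster_word_of_BC c1 c2 u = replicate c1 3 @ replicate (length u) 2 @ replicate c2 1"

lemma bij_betw_append_image:
  assumes f: "bij_betw f A A'" and g: "\<And>u. u \<in> A \<Longrightarrow> g (xs @ u) = ys @ f u"
  shows "bij_betw g ((@) xs ` A) ((@) ys ` A')"
  unfolding bij_betw_def
proof
  show "inj_on g ((@) xs ` A)"
  proof (rule inj_onI)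
    fix v v' assume "v \<in> (@) xs ` A" "v' \<in> (@) xs ` A" and "g v = g v'"
    then obtain u u' where u: "u \<in> A" "u' \<in> A" "v = xs @ u" "v' = xs @ u'" and "f u = f u'"
      using g by auto
    then show "v = v'" using inj_onD[OF bij_betw_imp_inj_on[OF f]] by simp
  qed
  have "g ` (@) xs ` A = (@) ys ` f ` A"
    unfolding image_image using g by (intro image_cong) auto
  then show "g ` (@) xs ` A = (@) ys ` A'" using f by (simp add: bij_betw_def)
qed

lemma bij_betw_lobster_word_of_BC_degenerate:
  assumes "min c1 c2 = 0"
  shows "bij_betw (lobster_word_of_BC c1 c2) (BC_words b (min c1 c2))
    {w. swap_minimal (lobster_word b c1 c2) w}"
proof -
  have "lobster_word_of_BC c1 c2 (replicate b B) = replicate c1 3 @ replicate b 2 @ replicate c2 1"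
    using assms by (cases c1; cases c2) auto
  then show ?thesis
    using assms swap_minimal_lobster_degenerate[OF assms, of b] by (auto simp: BC_words_0)
qed

lemma bij_betw_lobster_word_of_BC:
  "bij_betw (lobster_word_of_BC c1 c2) (BC_words b (min c1 c2)) {w. swap_minimal (lobster_word b c1 c2) w}"
proof (induction c1 arbitrary: c2 b)
  case 0
  show ?case by (rule bij_betw_lobster_word_of_BC_degenerate) simp
next
  case (Suc c1)
  note outer = Suc.IH
  show ?case
  proof (cases c2)
    case 0
    show ?thesis by (rule bij_betw_lobster_word_of_BC_degenerate) (simp add: 0)
  next
    case (Suc c2')
    have "bij_betw (lobster_word_of_BC (Suc c1) (Suc c2')) (BC_words n (Suc (min c1 c2')))
        {w. swap_minimal (lobster_word n (Suc c1) (Suc c2')) w}" for n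
    proof (induction n)
      case 0
      show ?case
        unfolding BC_words_0_Suc minimal_lobster_words_0_Suc
        by (rule bij_betw_append_image[OF outer[of c2' 0]]) simp
    next
      case (Suc n)
      show ?case
        unfolding BC_words_Suc_Suc minimal_lobster_words_Suc_Suc
      proof (rule bij_betw_combine)
        show "bij_betw (lobster_word_of_BC (Suc c1) (Suc c2')) ((@) [B] ` BC_words n (Suc (min c1 c2')))
            ((@) [2] ` {w. swap_minimal (lobster_word n (Suc c1) (Suc c2')) w})"
          by (rule bij_betw_append_image[OF Suc.IH]) simp
        show "bij_betw (lobster_word_of_BC (Suc c1) (Suc c2')) ((@) [C] ` BC_words (Suc n) (min c1 c2'))
            ((@) [1, 3] ` {w. swap_minimal (lobster_word (Suc n) c1 c2') w})"
          by (rule bij_betw_append_image[OF outer[of c2' "Suc n"]]) simp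
      qed auto
    qed
    then show ?thesis using Suc by simp
  qed
qed

lemma minimal_SET_lobster:
  "minimal_SET (lobster_alpha b c1 c2) (lobster_beta b)
    = word_tableau (lobster_alpha b c1 c2) (lobster_beta b) ` {w. swap_minimal (lobster_word b c1 c2) w}"
proof -
  have "standard_word (lobster_alpha b c1 c2) (lobster_beta b) = lobster_word b c1 c2"
    using standard_word_lobster_iff by blast
  then show ?thesis by (simp add: minimal_SET_eq_image_word_tableau)
qed

theorem bij_betw_BC_words_minimal_SET:
  "bij_betw (word_tableau (lobster_alpha b c1 c2) (lobster_beta b) \<circ> lobster_word_of_BC c1 c2)
    (BC_words b (min c1 c2)) (minimal_SET (lobster_alpha b c1 c2) (lobster_beta b))"
proof (rule bij_betw_trans[OF bij_betw_lobster_word_of_BC])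
  have "inj_on (word_tableau (lobster_alpha b c1 c2) (lobster_beta b)) {w. swap_minimal (lobster_word b c1 c2) w}"
    by (rule inj_on_subset[OF inj_on_word_tableau])
      (auto simp: swap_minimal_def lobster_word_def word_of_shape_lobster_iff)
  then show "bij_betw (word_tableau (lobster_alpha b c1 c2) (lobster_beta b))
      {w. swap_minimal (lobster_word b c1 c2) w} (minimal_SET (lobster_alpha b c1 c2) (lobster_beta b))"
    by (simp add: minimal_SET_lobster inj_on_imp_bij_betw)
qed

section \<open>The column-reading tableau\<close>

lemma lobster_word_of_BC_replicate_B:
  assumes "0 < min c1 c2"
  shows "lobster_word_of_BC c1 c2 (replicate n B @ u) = replicate n 2 @ lobster_word_of_BC c1 c2 u"
proof -
  obtain c1' c2' where "c1 = Suc c1'" "c2 = Suc c2'"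
    using assms by (cases c1; cases c2) auto
  then show ?thesis by (induction n) simp_all
qed

lemma nth_occurrence_lobster_word_of_BC_1:
  "k < c2 \<Longrightarrow> nth_occurrence (lobster_word_of_BC c1 c2 (replicate (min c1 c2) C)) 1 k (k + min c1 k)"
proof (induction c1 arbitrary: c2 k)
  case 0
  then show ?case by (simp add: nth_occurrence_replicate)
next
  case (Suc c1)
  then obtain c2' where c2: "c2 = Suc c2'" by (cases c2) auto
  show ?case
  proof (cases k)
    case 0
    then show ?thesis using c2 by (simp add: nth_occurrence_def)
  next
    case (Suc k')
    then have "nth_occurrence ([1, 3] @ lobster_word_of_BC c1 c2' (replicate (min c1 c2') C)) 1
        (count_list [1, 3::nat] 1 + k') (length [1, 3::nat] + (k' + min c1 k'))"
      using Suc.IH[of k' c2'] Suc.prems c2 by (intro nth_occurrence_append_left) simp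
    then show ?thesis using c2 Suc by simp
  qed
qed

lemma nth_occurrence_lobster_word_of_BC_3:
  "k < c1 \<Longrightarrow> nth_occurrence (lobster_word_of_BC c1 c2 (replicate (min c1 c2) C)) 3 k (k + min c2 (Suc k))"
proof (induction c1 arbitrary: c2 k)
  case 0
  then show ?case by simp
next
  case (Suc c1)
  show ?case
  proof (cases c2)
    case 0
    then show ?thesis using Suc.prems nth_occurrence_replicate[of k "Suc c1" 3] by simp
  next
    case (Suc c2')
    show ?thesis
    proof (cases k)
      case 0
      then show ?thesis using Suc by (simp add: nth_occurrence_def)
    next
      case (Suc k')
      then have "nth_occurrence ([1, 3] @ lobster_word_of_BC c1 c2' (replicate (min c1 c2') C)) 3
          (count_list [1, 3::nat] 3 + k') (length [1, 3::nat] + (k' + min c2' (Suc k')))"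
        using Suc.IH[of k' c2'] Suc.prems by (intro nth_occurrence_append_left) simp
      then show ?thesis using \<open>c2 = Suc c2'\<close> Suc by simp
    qed
  qed
qed

lemma word_tableau_lobster_column_word:
  assumes x: "(r, col) \<in> skew_cells (lobster_alpha b c1 c2) (lobster_beta b)"
  shows "word_tableau (lobster_alpha b c1 c2) (lobster_beta b)
      (replicate b 2 @ lobster_word_of_BC c1 c2 (replicate (min c1 c2) C)) (r, col)
    = col - 1 + (if r = 1 then min c1 (col - b - 2) else if r = 3 then min c2 (col - b - 1) else 0)"
proof -
  let ?w = "replicate b 2 @ lobster_word_of_BC c1 c2 (replicate (min c1 c2) C)"
  have tab: "word_tableau (lobster_alpha b c1 c2) (lobster_beta b) ?w (r, col) = Suc p"
    if "nth_occurrence ?w r (row_index (lobster_beta b) (r, col)) p" for p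
    using word_tableau_eq[OF x] that by simp
  consider (one) "r = 1" "b + 1 < col" "col \<le> b + 1 + c2" | (two) "r = 2" "1 < col" "col \<le> b + 1"
    | (three) "r = 3" "b + 1 < col" "col \<le> b + 1 + c1"
    using x by (auto simp: lobster_cell_iff)
  then show ?thesis
  proof cases
    case one
    define k where "k = col - b - 2"
    have "nth_occurrence ?w 1 (count_list (replicate b (2::nat)) 1 + k)
        (length (replicate b (2::nat)) + (k + min c1 k))"
      using one by (intro nth_occurrence_append_left nth_occurrence_lobster_word_of_BC_1) (simp add: k_def)
    then show ?thesis using tab one by (simp add: lobster_row_index k_def)
  next
    case two
    have "nth_occurrence ?w 2 (col - 2) (col - 2)"
      using two by (intro nth_occurrence_append_right nth_occurrence_replicate) simp
    then show ?thesis using tab two by (simp add: lobster_row_index)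
  next
    case three
    define k where "k = col - b - 2"
    have "nth_occurrence ?w 3 (count_list (replicate b (2::nat)) 3 + k)
        (length (replicate b (2::nat)) + (k + min c2 (Suc k)))"
      using three by (intro nth_occurrence_append_left nth_occurrence_lobster_word_of_BC_3) (simp add: k_def)
    moreover have "Suc k = col - b - 1" using three by (simp add: k_def)
    ultimately show ?thesis using tab three by (simp add: lobster_row_index k_def)
  qed
qed

lemma card_Ioc_before:
  "card {j \<in> {a<..e}. j < col \<or> j = col \<and> Q} = min e (if Q then col else col - 1) - (a::nat)"
proof -
  have "{j \<in> {a<..e}. j < col \<or> j = col \<and> Q} = {a<..min e (if Q then col else col - 1)}" by auto
  then show ?thesis by simp
qed

lemma S_col_lobster:
  assumes x: "(r, col) \<in> skew_cells (lobster_alpha b c1 c2) (lobster_beta b)"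
  shows "S_col (lobster_alpha b c1 c2) (lobster_beta b) (r, col)
    = col - 1 + (if r = 1 then min c1 (col - b - 2) else if r = 3 then min c2 (col - b - 1) else 0)"
proof -
  let ?\<alpha> = "lobster_alpha b c1 c2" and ?\<beta> = "lobster_beta b"
  let ?I = "\<lambda>r'. {j \<in> {?\<beta> ! (r' - 1)<..?\<alpha> ! (r' - 1)}. j < col \<or> j = col \<and> r' \<le> r}"
  have "{y \<in> skew_cells ?\<alpha> ?\<beta>. snd y < col \<or> snd y = col \<and> fst y \<le> r} = (SIGMA r':{1..3}. ?I r')"
    by (auto simp: skew_cells_eq_Sigma lobster_alpha_def)
  then have "S_col ?\<alpha> ?\<beta> (r, col) = (\<Sum>r'\<in>{1..3}. card (?I r'))"
    using x by (simp add: S_col_def)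
  also have "\<dots> = card (?I 1) + card (?I 2) + card (?I 3)"
  proof -
    have "{1..3::nat} = {1, 2, 3}" by auto
    then show ?thesis by simp
  qed
  also have "\<dots> = col - 1 + (if r = 1 then min c1 (col - b - 2) else if r = 3 then min c2 (col - b - 1) else 0)"
  proof -
    consider "r = 1" "b + 1 < col" "col \<le> b + 1 + c2" | "r = 2" "1 < col" "col \<le> b + 1"
      | "r = 3" "b + 1 < col" "col \<le> b + 1 + c1"
      using x by (auto simp: lobster_cell_iff)
    then show ?thesis
      unfolding card_Ioc_before
      by cases (auto simp: lobster_alpha_def lobster_beta_def min_def)
  qed
  finally show ?thesis .
qed

lemma S_col_lobster_eq_word_tableau:
  "S_col (lobster_alpha b c1 c2) (lobster_beta b)
    = word_tableau (lobster_alpha b c1 c2) (lobster_beta b)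
        (replicate b 2 @ lobster_word_of_BC c1 c2 (replicate (min c1 c2) C))"
proof
  fix x
  show "S_col (lobster_alpha b c1 c2) (lobster_beta b) x
    = word_tableau (lobster_alpha b c1 c2) (lobster_beta b)
        (replicate b 2 @ lobster_word_of_BC c1 c2 (replicate (min c1 c2) C)) x"
  proof (cases "x \<in> skew_cells (lobster_alpha b c1 c2) (lobster_beta b)")
    case True
    moreover obtain r col where "x = (r, col)" by (cases x)
    ultimately show ?thesis using S_col_lobster word_tableau_lobster_column_word by simp
  next
    case False
    then show ?thesis by (simp add: S_col_def word_tableau_def)
  qed
qed

theorem theorem5p4:
  fixes b c1 c2 :: nat
  assumes "0 < b" and "0 < c1" and "0 < c2"
  shows "(\<exists>f. bij_betw f (minimal_SET (lobster_alpha b c1 c2) (lobster_beta b))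
                          (BC_words b (min c1 c2)))
         \<and> card (minimal_SET (lobster_alpha b c1 c2) (lobster_beta b)) = (b + min c1 c2) choose b
         \<and> S_col (lobster_alpha b c1 c2) (lobster_beta b) \<in> minimal_SET (lobster_alpha b c1 c2) (lobster_beta b)"
proof -
  let ?\<alpha> = "lobster_alpha b c1 c2" and ?\<beta> = "lobster_beta b" and ?c = "min c1 c2"
  have bij: "bij_betw (word_tableau ?\<alpha> ?\<beta> \<circ> lobster_word_of_BC c1 c2) (BC_words b ?c) (minimal_SET ?\<alpha> ?\<beta>)"
    by (rule bij_betw_BC_words_minimal_SET)
  have "replicate b B @ replicate ?c C \<in> BC_words b ?c" by (simp add: BC_words_def)
  then have "word_tableau ?\<alpha> ?\<beta> (lobster_word_of_BC c1 c2 (replicate b B @ replicate ?c C)) \<in> minimal_SET ?\<alpha> ?\<beta>"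
    using bij by (auto simp: bij_betw_def)
  moreover have "S_col ?\<alpha> ?\<beta> = word_tableau ?\<alpha> ?\<beta> (lobster_word_of_BC c1 c2 (replicate b B @ replicate ?c C))"
    using assms by (simp add: S_col_lobster_eq_word_tableau lobster_word_of_BC_replicate_B)
  ultimately show ?thesis
    using bij_betw_inv_into[OF bij] bij_betw_same_card[OF bij] card_BC_words by auto
qed

end
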